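(* For every dimension $n\geq 2$ there exists $C>0$ such that for all $\alpha>C$, $$\mathbb{P}\big(R_\alpha^{c}\big)\leq \alpha^{-2n-1}.$$
   Context: $B(\cdot)$ is a standard Brownian motion in $\mathbb{R}^n$. Independently of $B$, let $\{(x_i,y_i)\}_{i\in\mathbb{N}}$ be a Poisson point process of intensity $1$ on $[0,1]\times[0,\infty)$, and for $\alpha\geq 0$ set $\Lambda_\alpha=\{x_i: y_i\leq\alpha\}\cup\{0,1\}$. Let $\phi(\alpha)=e^{\sqrt{\log\alpha}}$. For $a<b$ define $N_\alpha[a,b]=\{\forall t\in[a,b]:\ \Lambda_\alpha\cap[t-\alpha^{-1}\phi(\alpha),t+\alpha^{-1}\phi(\alpha)]\neq\emptyset\}$, $M_\delta[a,b]=\sup\{|B(t_1)-B(t_2)|: t_1,t_2\in[a,b],\ |t_1-t_2|\leq\delta\}$, $Y_\alpha[a,b]=\{M_\delta[a,b]\leq \delta^{1/2}\phi(\alpha)+\alpha^{-2n-1}\ \text{for all } \delta\leq b-a\}$, and $R_\alpha[a,b]=N_\alpha[a,b]\cap Y_\alpha[a,b]$, $R_\alpha=R_\alpha[0,1]$. $R_\alpha^c$ denotes the complement. *)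

theory Defs
  imports "HOL-Probability.Probability"
begin

definition std_brownian :: "'a measure \<Rightarrow> (real \<Rightarrow> 'a \<Rightarrow> real^'n) \<Rightarrow> bool" where
  "std_brownian M B \<longleftrightarrow>
     prob_space M \<and>
     (\<forall>t\<ge>0. B t \<in> borel_measurable M) \<and>
     (\<forall>\<omega>\<in>space M. B 0 \<omega> = 0 \<and> continuous_on {0..} (\<lambda>t. B t \<omega>)) \<and>
     (\<forall>s t. 0 \<le> s \<and> s < t \<longrightarrow>
        distr M lborel (\<lambda>\<omega>. B t \<omega> - B s \<omega>) =
        density lborel (\<lambda>x. ennreal (\<Prod>i\<in>UNIV. normal_density 0 (sqrt (t - s)) (x $ i)))) \<and>
     (\<forall>(ts::nat \<Rightarrow> real) k. 0 \<le> ts 0 \<and> (\<forall>i<k. ts i < ts (Suc i)) \<longrightarrow>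
        prob_space.indep_vars M (\<lambda>_. borel) (\<lambda>i \<omega>. B (ts (Suc i)) \<omega> - B (ts i) \<omega>) {..<k})"

definition pp_count :: "(nat \<Rightarrow> 'a \<Rightarrow> real \<times> real) \<Rightarrow> (real \<times> real) set \<Rightarrow> 'a \<Rightarrow> nat" where
  "pp_count X A \<omega> = card {i. X i \<omega> \<in> A}"

text \<open>Poisson point process of intensity 1 (Lebesgue measure) on [0,1] x [0,\<infinity>),
  given by an enumeration of its points (x_i, y_i) = X i.\<close>
definition poisson_pp :: "'a measure \<Rightarrow> (nat \<Rightarrow> 'a \<Rightarrow> real \<times> real) \<Rightarrow> bool" where
  "poisson_pp M X \<longleftrightarrow>
     prob_space M \<and>
     (\<forall>i. X i \<in> borel_measurable M) \<and>
     (\<forall>i. \<forall>\<omega>\<in>space M. X i \<omega> \<in> {0..1} \<times> {0..}) \<and>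
     (\<forall>A. A \<in> sets borel \<and> A \<subseteq> {0..1} \<times> {0..} \<and> emeasure lborel A < \<infinity> \<longrightarrow>
        (AE \<omega> in M. finite {i. X i \<omega> \<in> A}) \<and>
        (\<forall>k. measure M {\<omega>\<in>space M. pp_count X A \<omega> = k} =
              measure lborel A ^ k / fact k * exp (- measure lborel A))) \<and>
     (\<forall>(As :: nat \<Rightarrow> (real \<times> real) set) J. finite J \<and>
        (\<forall>j\<in>J. As j \<in> sets borel \<and> As j \<subseteq> {0..1} \<times> {0..} \<and> emeasure lborel (As j) < \<infinity>) \<and>
        disjoint_family_on As J \<longrightarrow>
        prob_space.indep_vars M (\<lambda>_. count_space UNIV) (\<lambda>j. pp_count X (As j)) J)"

definition bm_ppp :: "'a measure \<Rightarrow> (real \<Rightarrow> 'a \<Rightarrow> real^'n) \<Rightarrow> (nat \<Rightarrow> 'a \<Rightarrow> real \<times> real) \<Rightarrow> bool" where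
  "bm_ppp M B X \<longleftrightarrow> std_brownian M B \<and> poisson_pp M X \<and>
     prob_space.indep_set M
       {(\<lambda>\<omega>. restrict (\<lambda>t. B t \<omega>) {0..}) -` S \<inter> space M | S.
          S \<in> sets (Pi\<^sub>M {0..} (\<lambda>_::real. (borel :: (real^'n) measure)))}
       {(\<lambda>\<omega> i. X i \<omega>) -` S \<inter> space M | S.
          S \<in> sets (Pi\<^sub>M (UNIV::nat set) (\<lambda>_. (borel :: (real \<times> real) measure)))}"

definition phi :: "real \<Rightarrow> real" where
  "phi \<alpha> = exp (sqrt (ln \<alpha>))"

definition Lambda :: "(nat \<Rightarrow> 'a \<Rightarrow> real \<times> real) \<Rightarrow> real \<Rightarrow> 'a \<Rightarrow> real set" where
  "Lambda X \<alpha> \<omega> = {fst (X i \<omega>) | i. snd (X i \<omega>) \<le> \<alpha>} \<union> {0, 1}"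

definition N_ev :: "(nat \<Rightarrow> 'a \<Rightarrow> real \<times> real) \<Rightarrow> real \<Rightarrow> real \<Rightarrow> real \<Rightarrow> 'a \<Rightarrow> bool" where
  "N_ev X \<alpha> a b \<omega> \<longleftrightarrow>
     (\<forall>t\<in>{a..b}. Lambda X \<alpha> \<omega> \<inter> {t - phi \<alpha> / \<alpha> .. t + phi \<alpha> / \<alpha>} \<noteq> {})"

definition modulus :: "(real \<Rightarrow> 'a \<Rightarrow> real^'n) \<Rightarrow> real \<Rightarrow> real \<Rightarrow> real \<Rightarrow> 'a \<Rightarrow> real" where
  "modulus B \<delta> a b \<omega> =
     Sup {norm (B t1 \<omega> - B t2 \<omega>) | t1 t2. t1 \<in> {a..b} \<and> t2 \<in> {a..b} \<and> \<bar>t1 - t2\<bar> \<le> \<delta>}"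

definition Y_ev :: "(real \<Rightarrow> 'a \<Rightarrow> real^'n) \<Rightarrow> real \<Rightarrow> real \<Rightarrow> real \<Rightarrow> 'a \<Rightarrow> bool" where
  "Y_ev B \<alpha> a b \<omega> \<longleftrightarrow>
     (\<forall>\<delta>. 0 < \<delta> \<and> \<delta> \<le> b - a \<longrightarrow>
        modulus B \<delta> a b \<omega> \<le> sqrt \<delta> * phi \<alpha> + \<alpha> powr (- (2 * real CARD('n) + 1)))"

definition R_ev :: "(real \<Rightarrow> 'a \<Rightarrow> real^'n) \<Rightarrow> (nat \<Rightarrow> 'a \<Rightarrow> real \<times> real) \<Rightarrow> real \<Rightarrow> real \<Rightarrow> real \<Rightarrow> 'a \<Rightarrow> bool" where
  "R_ev B X \<alpha> a b \<omega> \<longleftrightarrow> N_ev X \<alpha> a b \<omega> \<and> Y_ev B \<alpha> a b \<omega>"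

end

theory Submission
  imports Defs "HOL-Real_Asymp.Real_Asymp"
begin

(* The two events are handled by separate union bounds.

   N: cut [0,1] into m ~ alpha / phi(alpha) cells. If every cell contains a Poisson point of height
   at most alpha, every t in [0,1] is within 1/m <= phi(alpha)/alpha of Lambda_alpha. A cell misses
   all such points with probability exp(-alpha/m) <= exp(-phi(alpha)/2), which beats every power
   of alpha.

   Y: a Levy-type chaining argument. Put L = (2n+2) log alpha and rho^2 = (1 + 1/L)/2. By Gaussian
   tails, the probability that some dyadic increment of B at level j exceeds 2 sqrt L rho^j is
   summable in j and at most a constant times exp(-L) = alpha^(-2n-2). Off this event, the
   oscillation of B at scale delta ~ 2^-J is at most 20 sqrt L rho^J, and since
   (2 rho^2)^J = (1 + 1/L)^J, this is at most sqrt delta phi(alpha) when J <= 3L and at most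
   alpha^(-2n-1) when J > 3L. *)

section \<open>Gaussian tails of Brownian increments\<close>

lemma normal_density_mult_exp:
  fixes \<tau> y :: real
  assumes "\<tau> > 0"
  shows "normal_density 0 (sqrt \<tau>) y * exp (y\<^sup>2 / (4 * \<tau>))
       = sqrt 2 * normal_density 0 (sqrt (2 * \<tau>)) y"
proof -
  have exp: "exp (- (y\<^sup>2) / (2 * \<tau>)) * exp (y\<^sup>2 / (4 * \<tau>)) = exp (- (y\<^sup>2) / (2 * (2 * \<tau>)))"
    unfolding exp_add[symmetric] using assms by (simp add: field_simps)
  have sqrt: "sqrt (pi * (\<tau> * 4)) = sqrt 2 * sqrt (pi * (\<tau> * 2))"
    by (subst real_sqrt_mult[symmetric]) (simp add: mult_ac)
  show ?thesis
    unfolding normal_density_def using assms exp sqrt by (simp add: field_simps)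
qed

lemma prod_normal_density_mult_exp:
  fixes \<tau> :: real and v :: "real^'n"
  assumes "\<tau> > 0"
  shows "(\<Prod>i\<in>UNIV. normal_density 0 (sqrt \<tau>) (v $ i)) * exp ((norm v)\<^sup>2 / (4 * \<tau>))
       = sqrt 2 ^ CARD('n) * (\<Prod>i\<in>UNIV. normal_density 0 (sqrt (2 * \<tau>)) (v $ i))"
proof -
  have "exp ((norm v)\<^sup>2 / (4 * \<tau>)) = (\<Prod>i\<in>UNIV. exp ((v $ i)\<^sup>2 / (4 * \<tau>)))"
    unfolding power2_norm_eq_inner inner_vec_def
    by (simp add: power2_eq_square sum_divide_distrib exp_sum)
  then have "(\<Prod>i\<in>UNIV. normal_density 0 (sqrt \<tau>) (v $ i)) * exp ((norm v)\<^sup>2 / (4 * \<tau>))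
      = (\<Prod>i\<in>UNIV. normal_density 0 (sqrt \<tau>) (v $ i) * exp ((v $ i)\<^sup>2 / (4 * \<tau>)))"
    by (simp add: prod.distrib)
  then show ?thesis
    using normal_density_mult_exp[OF assms] by (simp add: prod.distrib)
qed

lemma prod_normal_density_le_wider:
  fixes v :: "real^'n"
  assumes "\<tau> > 0" "0 \<le> x" "x < norm v"
  shows "(\<Prod>i\<in>UNIV. normal_density 0 (sqrt \<tau>) (v $ i))
       \<le> sqrt 2 ^ CARD('n) * exp (- (x\<^sup>2) / (4 * \<tau>))
           * (\<Prod>i\<in>UNIV. normal_density 0 (sqrt (2 * \<tau>)) (v $ i))"
proof -
  let ?f = "\<Prod>i\<in>UNIV. normal_density 0 (sqrt \<tau>) (v $ i)"
  have "x\<^sup>2 \<le> (norm v)\<^sup>2"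
    using assms by (simp add: power_mono)
  then have "1 \<le> exp ((norm v)\<^sup>2 / (4 * \<tau>)) * exp (- (x\<^sup>2) / (4 * \<tau>))"
    using assms(1) by (simp add: exp_add[symmetric] field_simps)
  moreover have "0 \<le> ?f"
    by (simp add: prod_nonneg)
  ultimately have "?f \<le> ?f * exp ((norm v)\<^sup>2 / (4 * \<tau>)) * exp (- (x\<^sup>2) / (4 * \<tau>))"
    by (metis mult_left_mono mult.right_neutral mult.assoc)
  also have "\<dots> = sqrt 2 ^ CARD('n) * (\<Prod>i\<in>UNIV. normal_density 0 (sqrt (2 * \<tau>)) (v $ i))
      * exp (- (x\<^sup>2) / (4 * \<tau>))"
    by (simp only: prod_normal_density_mult_exp[OF assms(1)])
  finally show ?thesis
    by (simp add: mult_ac)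
qed

text \<open>Reading this off from the law of \<open>B \<tau> - B 0\<close> avoids computing an \<open>n\<close>-dimensional
  Gaussian integral.\<close>

lemma std_brownian_gaussian_integral:
  fixes B :: "real \<Rightarrow> 'a \<Rightarrow> real^'n"
  assumes bm: "std_brownian M B" and "\<tau> > 0"
  shows "(\<integral>\<^sup>+ v. ennreal (\<Prod>i\<in>UNIV. normal_density 0 (sqrt \<tau>) ((v::real^'n) $ i)) \<partial>lborel) = 1"
proof -
  interpret prob_space M
    using bm by (simp add: std_brownian_def)
  have "(\<integral>\<^sup>+ v. ennreal (\<Prod>i\<in>UNIV. normal_density 0 (sqrt \<tau>) ((v::real^'n) $ i)) \<partial>lborel)
      = emeasure (density lborel (\<lambda>v. ennreal (\<Prod>i\<in>UNIV. normal_density 0 (sqrt \<tau>) ((v::real^'n) $ i)))) UNIV"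
    by (simp add: emeasure_density)
  also have "\<dots> = emeasure (distr M lborel (\<lambda>\<omega>. B \<tau> \<omega> - B 0 \<omega>)) UNIV"
    using bm assms(2) by (simp add: std_brownian_def)
  also have "\<dots> = 1"
    using bm assms(2)
    by (subst emeasure_distr) (auto simp: std_brownian_def emeasure_space_1 intro!: borel_measurable_diff)
  finally show ?thesis .
qed

lemma std_brownian_increment_tail:
  fixes B :: "real \<Rightarrow> 'a \<Rightarrow> real^'n"
  assumes bm: "std_brownian M B" and "0 \<le> s" "s < t" "0 \<le> x"
  shows "{\<omega>\<in>space M. x < norm (B t \<omega> - B s \<omega>)} \<in> sets M"
    and "measure M {\<omega>\<in>space M. x < norm (B t \<omega> - B s \<omega>)}
           \<le> sqrt 2 ^ CARD('n) * exp (- (x\<^sup>2) / (4 * (t - s)))"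
proof -
  interpret prob_space M
    using bm by (simp add: std_brownian_def)
  define D where "D = (\<lambda>\<omega>. B t \<omega> - B s \<omega>)"
  define S where "S = {v::real^'n. x < norm v}"
  define c where "c = sqrt 2 ^ CARD('n) * exp (- (x\<^sup>2) / (4 * (t - s)))"
  define g where "g \<sigma> = (\<lambda>v::real^'n. ennreal (\<Prod>i\<in>UNIV. normal_density 0 \<sigma> (v $ i)))" for \<sigma>
  have D: "D \<in> borel_measurable M"
    unfolding D_def using bm assms(2,3) by (auto simp: std_brownian_def intro!: borel_measurable_diff)
  have S: "S \<in> sets borel"
    unfolding S_def by measurable
  have event: "{\<omega>\<in>space M. x < norm (B t \<omega> - B s \<omega>)} = D -` S \<inter> space M"
    by (auto simp: D_def S_def)
  show sets: "{\<omega>\<in>space M. x < norm (B t \<omega> - B s \<omega>)} \<in> sets M"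
    unfolding event using D S by (simp add: measurable_sets)
  have "emeasure M {\<omega>\<in>space M. x < norm (B t \<omega> - B s \<omega>)} = emeasure (distr M lborel D) S"
    unfolding event using D S by (subst emeasure_distr) auto
  also have "\<dots> = emeasure (density lborel (g (sqrt (t - s)))) S"
    using bm assms(2,3) by (simp add: std_brownian_def D_def g_def)
  also have "\<dots> = (\<integral>\<^sup>+ v. g (sqrt (t - s)) v * indicator S v \<partial>lborel)"
    using S by (subst emeasure_density) (auto simp: g_def)
  also have "\<dots> \<le> (\<integral>\<^sup>+ v. ennreal c * g (sqrt (2 * (t - s))) v \<partial>lborel)"
  proof (rule nn_integral_mono)
    fix v :: "real^'n"
    show "g (sqrt (t - s)) v * indicator S v \<le> ennreal c * g (sqrt (2 * (t - s))) v"
    proof (cases "v \<in> S")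
      case True
      then have "(\<Prod>i\<in>UNIV. normal_density 0 (sqrt (t - s)) (v $ i))
          \<le> c * (\<Prod>i\<in>UNIV. normal_density 0 (sqrt (2 * (t - s))) (v $ i))"
        using prod_normal_density_le_wider[of "t - s" x v] assms(3,4) by (simp add: S_def c_def)
      then show ?thesis
        using True by (simp add: g_def c_def ennreal_mult'[symmetric] ennreal_leI)
    qed simp
  qed
  also have "\<dots> = ennreal c"
    using std_brownian_gaussian_integral[OF bm, of "2 * (t - s)"] assms(3)
    by (simp add: g_def nn_integral_cmult)
  finally show "measure M {\<omega>\<in>space M. x < norm (B t \<omega> - B s \<omega>)} \<le> c"
    using sets by (simp add: emeasure_eq_measure c_def)
qed

section \<open>Covering by Poisson points\<close>

lemma poisson_pp_prob_empty:
  assumes "poisson_pp M X" "A \<in> sets borel" "A \<subseteq> {0..1} \<times> {0..}" "emeasure lborel A < \<infinity>"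
  shows "{\<omega>\<in>space M. pp_count X A \<omega> = 0} \<in> sets M"
    and "measure M {\<omega>\<in>space M. pp_count X A \<omega> = 0} = exp (- measure lborel A)"
proof -
  have "\<forall>k. measure M {\<omega>\<in>space M. pp_count X A \<omega> = k}
          = measure lborel A ^ k / fact k * exp (- measure lborel A)"
    using assms unfolding poisson_pp_def by blast
  from spec[OF this, of 0]
  show prob: "measure M {\<omega>\<in>space M. pp_count X A \<omega> = 0} = exp (- measure lborel A)"
    by simp
  \<comment> \<open>measurability is not part of \<open>poisson_pp\<close>, but non-measurable sets have measure 0\<close>
  show "{\<omega>\<in>space M. pp_count X A \<omega> = 0} \<in> sets M"
    using measure_notin_sets[of "{\<omega>\<in>space M. pp_count X A \<omega> = 0}" M] prob by fastforce
qed

lemma unit_interval_grid_cell: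
  fixes t :: real
  assumes "t \<in> {0..1}" "m \<ge> 1"
  obtains k :: nat where "k < m" "real k \<le> t * m" "t * m \<le> real k + 1"
proof (cases "t * m < m")
  case True
  define k where "k = nat \<lfloor>t * m\<rfloor>"
  have "real k \<le> t * m" "t * m < real k + 1"
    using assms(1) by (simp_all add: k_def of_nat_nat)
  moreover have "k < m"
    using True \<open>real k \<le> t * m\<close> by linarith
  ultimately show ?thesis
    using that by auto
next
  case False
  then have "t = 1"
    using assms by auto
  then show ?thesis
    using that[of "m - 1"] assms(2) by (auto simp: of_nat_diff)
qed

lemma N_ev_fails_grid:
  fixes X :: "nat \<Rightarrow> 'a \<Rightarrow> real \<times> real"
  assumes pp: "poisson_pp M X" and "\<alpha> > 0" "m \<ge> 1" "1 / real m \<le> phi \<alpha> / \<alpha>"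
  shows "\<exists>E\<in>sets M. {\<omega>\<in>space M. \<not> N_ev X \<alpha> 0 1 \<omega>} \<subseteq> E
           \<and> measure M E \<le> real m * exp (- \<alpha> / real m)"
proof -
  interpret prob_space M
    using pp by (simp add: poisson_pp_def)
  define A where "A k = {real k / real m .. (real k + 1) / real m} \<times> {0..\<alpha>}" for k :: nat
  have m: "real m > 0"
    using assms(3) by simp
  have A: "A k \<in> sets borel" "A k \<subseteq> {0..1} \<times> {0..}" "emeasure lborel (A k) < \<infinity>"
    and measure_A: "measure lborel (A k) = \<alpha> / real m" if "k < m" for k
  proof -
    have "(real k + 1) / real m \<le> 1"
      using that m by (simp add: field_simps)
    then show "A k \<subseteq> {0..1} \<times> {0..}"
      unfolding A_def using order_trans[of 0 "real k / real m"] by auto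
    show "A k \<in> sets borel"
      unfolding A_def by (intro borel_closed closed_Times) auto
    show "emeasure lborel (A k) < \<infinity>"
      using emeasure_lborel_cbox_finite[of "(real k / m, 0)" "((real k + 1) / m, \<alpha>)"]
      by (simp add: A_def cbox_Pair_eq)
    have "(real k + 1) / real m - real k / real m = 1 / real m"
      by (simp add: diff_divide_distrib[symmetric])
    then show "measure lborel (A k) = \<alpha> / real m"
      using content_Pair[of "real k / m" 0 "(real k + 1) / m" \<alpha>] m assms(2)
      by (simp add: A_def cbox_Pair_eq divide_right_mono)
  qed
  define E where "E = (\<Union>k<m. {\<omega>\<in>space M. pp_count X (A k) \<omega> = 0})"
  have "E \<in> sets M"
    unfolding E_def using poisson_pp_prob_empty(1)[OF pp A] by auto
  moreover have "measure M E \<le> real m * exp (- \<alpha> / real m)"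
  proof -
    have "measure M E \<le> (\<Sum>k<m. measure M {\<omega>\<in>space M. pp_count X (A k) \<omega> = 0})"
      unfolding E_def using poisson_pp_prob_empty(1)[OF pp A] by (intro measure_UNION_le) auto
    also have "\<dots> = (\<Sum>k<m. exp (- \<alpha> / real m))"
      using poisson_pp_prob_empty(2)[OF pp A] measure_A by simp
    finally show ?thesis
      by simp
  qed
  moreover have "N_ev X \<alpha> 0 1 \<omega>" if "\<omega> \<notin> E" "\<omega> \<in> space M" for \<omega>
    unfolding N_ev_def
  proof
    fix t :: real
    assume "t \<in> {0..1}"
    then obtain k where k: "k < m" "real k \<le> t * m" "t * m \<le> real k + 1"
      using unit_interval_grid_cell assms(3) by metis
    with that have "pp_count X (A k) \<omega> \<noteq> 0"
      unfolding E_def by auto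
    then obtain i where i: "X i \<omega> \<in> A k"
      unfolding pp_count_def by (metis (mono_tags) Collect_empty_eq card.empty)
    let ?p = "fst (X i \<omega>)"
    have "real k / real m \<le> t" "t \<le> (real k + 1) / real m"
      using k m by (simp_all add: field_simps)
    then have "\<bar>t - ?p\<bar> \<le> 1 / real m"
      using i m by (auto simp: A_def mem_Times_iff abs_le_iff field_simps)
    then have "?p \<in> {t - phi \<alpha> / \<alpha> .. t + phi \<alpha> / \<alpha>}"
      using assms(4) by (auto simp: abs_le_iff)
    moreover have "?p \<in> Lambda X \<alpha> \<omega>"
      using i unfolding Lambda_def A_def by (auto simp: mem_Times_iff)
    ultimately show "Lambda X \<alpha> \<omega> \<inter> {t - phi \<alpha> / \<alpha> .. t + phi \<alpha> / \<alpha>} \<noteq> {}"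
      by blast
  qed
  ultimately show ?thesis
    by blast
qed

lemma phi_bounds:
  assumes "exp 1 \<le> \<alpha>"
  shows "1 \<le> phi \<alpha>" "phi \<alpha> \<le> \<alpha>"
proof -
  have "\<alpha> > 0"
    using assms exp_gt_zero[of 1] by linarith
  then have "1 \<le> ln \<alpha>"
    using ln_le_cancel_iff[of "exp 1" \<alpha>] assms by simp
  then have "sqrt (ln \<alpha>) \<le> sqrt ((ln \<alpha>)\<^sup>2)"
    by (intro real_sqrt_le_mono) (simp add: power2_eq_square)
  then have "sqrt (ln \<alpha>) \<le> ln \<alpha>"
    using \<open>1 \<le> ln \<alpha>\<close> by simp
  then show "phi \<alpha> \<le> \<alpha>"
    using \<open>\<alpha> > 0\<close> unfolding phi_def by (metis exp_le_cancel_iff exp_ln)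
  show "1 \<le> phi \<alpha>"
    unfolding phi_def using \<open>1 \<le> ln \<alpha>\<close> by simp
qed

lemma N_ev_fails:
  fixes X :: "nat \<Rightarrow> 'a \<Rightarrow> real \<times> real"
  assumes pp: "poisson_pp M X" and "1 \<le> phi \<alpha>" "phi \<alpha> \<le> \<alpha>"
  shows "\<exists>E\<in>sets M. {\<omega>\<in>space M. \<not> N_ev X \<alpha> 0 1 \<omega>} \<subseteq> E
           \<and> measure M E \<le> 2 * \<alpha> * exp (- phi \<alpha> / 2)"
proof -
  define m where "m = nat \<lceil>\<alpha> / phi \<alpha>\<rceil>"
  have "\<alpha> > 0" "1 \<le> \<alpha> / phi \<alpha>"
    using assms by simp_all
  then have "real m = \<lceil>\<alpha> / phi \<alpha>\<rceil>"
    unfolding m_def by simp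
  then have m: "\<alpha> / phi \<alpha> \<le> real m" "real m \<le> 2 * (\<alpha> / phi \<alpha>)"
    using le_of_int_ceiling[of "\<alpha> / phi \<alpha>"] of_int_ceiling_le_add_one[of "\<alpha> / phi \<alpha>"]
      \<open>1 \<le> \<alpha> / phi \<alpha>\<close> by linarith+
  then have "m \<ge> 1" "real m > 0"
    using \<open>1 \<le> \<alpha> / phi \<alpha>\<close> by simp_all
  have "1 / real m \<le> phi \<alpha> / \<alpha>"
    using m(1) \<open>\<alpha> > 0\<close> \<open>real m > 0\<close> assms(2) by (simp add: field_simps)
  then obtain E where E: "E \<in> sets M" "{\<omega>\<in>space M. \<not> N_ev X \<alpha> 0 1 \<omega>} \<subseteq> E"
      "measure M E \<le> real m * exp (- \<alpha> / real m)"
    using N_ev_fails_grid[OF pp \<open>\<alpha> > 0\<close> \<open>m \<ge> 1\<close>] by blast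
  have "\<alpha> / phi \<alpha> \<le> \<alpha> / 1"
    using assms(2,3) by (intro divide_left_mono) auto
  with m(2) have "real m \<le> 2 * \<alpha>"
    by simp
  have "phi \<alpha> / 2 \<le> \<alpha> / real m"
    using m(2) \<open>real m > 0\<close> assms(2) by (simp add: field_simps)
  then have "exp (- \<alpha> / real m) \<le> exp (- phi \<alpha> / 2)"
    by simp
  with \<open>real m \<le> 2 * \<alpha>\<close> have "real m * exp (- \<alpha> / real m) \<le> 2 * \<alpha> * exp (- phi \<alpha> / 2)"
    by (intro mult_mono) auto
  then show ?thesis
    using E by (intro bexI[of _ E]) auto
qed

lemma N_ev_fails_powr:
  fixes X :: "nat \<Rightarrow> 'a \<Rightarrow> real \<times> real"
  assumes pp: "poisson_pp M X" and "exp 1 \<le> \<alpha>" "ln 4 + q * ln \<alpha> \<le> phi \<alpha> / 2"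
  shows "\<exists>E\<in>sets M. {\<omega>\<in>space M. \<not> N_ev X \<alpha> 0 1 \<omega>} \<subseteq> E \<and> measure M E \<le> \<alpha> powr (1 - q) / 2"
proof -
  have "\<alpha> > 0"
    using assms(2) exp_gt_zero[of 1] by linarith
  have "2 * \<alpha> * exp (- phi \<alpha> / 2) \<le> 2 * \<alpha> * exp (- (ln 4 + q * ln \<alpha>))"
    using assms(3) \<open>\<alpha> > 0\<close> by simp
  also have "\<dots> = 2 * \<alpha> * (exp (- ln 4) * exp (- q * ln \<alpha>))"
    by (subst exp_add[symmetric]) (simp add: algebra_simps)
  also have "\<dots> = \<alpha> * \<alpha> powr (- q) / 2"
    using \<open>\<alpha> > 0\<close> by (simp add: powr_def exp_minus)
  also have "\<dots> = \<alpha> powr (1 - q) / 2"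
    using \<open>\<alpha> > 0\<close> by (simp add: powr_mult_base)
  finally have "2 * \<alpha> * exp (- phi \<alpha> / 2) \<le> \<alpha> powr (1 - q) / 2" .
  with N_ev_fails[OF pp phi_bounds[OF assms(2)]] show ?thesis
    by (meson order_trans)
qed

section \<open>Dyadic chaining\<close>

definition dyadic_increments_le :: "(real \<Rightarrow> 'b::real_normed_vector) \<Rightarrow> (nat \<Rightarrow> real) \<Rightarrow> bool" where
  "dyadic_increments_le g a \<longleftrightarrow>
     (\<forall>j k. k < 2 ^ j \<longrightarrow> norm (g ((real k + 1) / 2 ^ j) - g (real k / 2 ^ j)) \<le> a j)"

definition dyadic_floor :: "nat \<Rightarrow> real \<Rightarrow> real" where
  "dyadic_floor j t = real (nat \<lfloor>2 ^ j * t\<rfloor>) / 2 ^ j"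

lemma dyadic_floor_bounds:
  assumes "t \<in> {0..1}"
  shows "nat \<lfloor>2 ^ j * t\<rfloor> \<le> 2 ^ j" "dyadic_floor j t \<in> {0..1}"
    and "t - 1 / 2 ^ j \<le> dyadic_floor j t" "dyadic_floor j t \<le> t"
proof -
  have "(2::real) ^ j * t \<le> 2 ^ j"
    using assms by (simp add: mult_left_le)
  then have "\<lfloor>(2::real) ^ j * t\<rfloor> \<le> 2 ^ j"
    unfolding floor_le_iff of_int_power of_int_numeral by linarith
  then show k: "nat \<lfloor>2 ^ j * t\<rfloor> \<le> 2 ^ j"
    by (simp add: nat_le_iff)
  have floor: "real (nat \<lfloor>2 ^ j * t\<rfloor>) \<le> 2 ^ j * t" "2 ^ j * t < real (nat \<lfloor>2 ^ j * t\<rfloor>) + 1"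
    using assms by (simp_all add: of_nat_nat)
  have "real (nat \<lfloor>2 ^ j * t\<rfloor>) \<le> 2 ^ j"
    using k by (metis of_nat_le_iff of_nat_numeral of_nat_power)
  then show "dyadic_floor j t \<in> {0..1}"
    unfolding dyadic_floor_def by (simp add: field_simps)
  have "(2 ^ j * t - 1) / 2 ^ j \<le> real (nat \<lfloor>2 ^ j * t\<rfloor>) / 2 ^ j"
    using floor(2) by (intro divide_right_mono) auto
  then show "t - 1 / 2 ^ j \<le> dyadic_floor j t"
    unfolding dyadic_floor_def by (simp add: diff_divide_distrib)
  show "dyadic_floor j t \<le> t"
    using floor(1) unfolding dyadic_floor_def by (simp add: field_simps)
qed

lemma floor_double_cases: "\<lfloor>2 * x\<rfloor> = 2 * \<lfloor>x\<rfloor> \<or> \<lfloor>2 * x\<rfloor> = 2 * \<lfloor>x\<rfloor> + 1" for x :: real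
proof -
  have "2 * \<lfloor>x\<rfloor> \<le> \<lfloor>2 * x\<rfloor>"
    by (simp add: le_floor_iff)
  moreover have "\<lfloor>2 * x\<rfloor> < 2 * \<lfloor>x\<rfloor> + 2"
    by (simp add: floor_less_iff) linarith
  ultimately show ?thesis
    by linarith
qed

lemma dyadic_floor_Suc_le:
  assumes "dyadic_increments_le g a" "\<And>j. 0 \<le> a j" "t \<in> {0..1}"
  shows "norm (g (dyadic_floor (Suc j) t) - g (dyadic_floor j t)) \<le> a (Suc j)"
proof -
  define k where "k = nat \<lfloor>2 ^ j * t\<rfloor>"
  define k' where "k' = nat \<lfloor>2 ^ Suc j * t\<rfloor>"
  have "k' = 2 * k \<or> k' = 2 * k + 1"
    using floor_double_cases[of "2 ^ j * t"] assms(3) unfolding k_def k'_def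
    by (auto simp: mult.assoc nat_mult_distrib nat_add_distrib)
  moreover have "k' \<le> 2 ^ Suc j"
    unfolding k'_def using dyadic_floor_bounds(1)[OF assms(3)] by blast
  ultimately consider "k' = 2 * k" | "k' = 2 * k + 1" "2 * k < 2 ^ Suc j"
    by fastforce
  then show ?thesis
  proof cases
    case 1
    then have "dyadic_floor (Suc j) t = dyadic_floor j t"
      unfolding dyadic_floor_def k_def[symmetric] k'_def[symmetric] by (simp add: field_simps)
    then show ?thesis
      using assms(2) by simp
  next
    case 2
    have "dyadic_floor (Suc j) t = (real (2 * k) + 1) / 2 ^ Suc j"
      unfolding dyadic_floor_def k'_def[symmetric] 2 by simp
    moreover have "dyadic_floor j t = real (2 * k) / 2 ^ Suc j"
      unfolding dyadic_floor_def k_def[symmetric] by (simp add: field_simps)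
    moreover have "norm (g ((real (2 * k) + 1) / 2 ^ Suc j) - g (real (2 * k) / 2 ^ Suc j)) \<le> a (Suc j)"
      using assms(1) 2(2) unfolding dyadic_increments_le_def by blast
    ultimately show ?thesis
      by simp
  qed
qed

lemma dyadic_floor_telescope_le:
  assumes "dyadic_increments_le g (\<lambda>j. A * \<rho> ^ j)" "0 \<le> A" "0 \<le> \<rho>" "\<rho> < 1"
    and "t \<in> {0..1}" "J \<le> m"
  shows "norm (g (dyadic_floor m t) - g (dyadic_floor J t)) \<le> A * (\<rho> ^ Suc J - \<rho> ^ Suc m) / (1 - \<rho>)"
  using \<open>J \<le> m\<close>
proof (induction m rule: dec_induct)
  case base
  then show ?case
    by simp
next
  case (step m)
  have "norm (g (dyadic_floor (Suc m) t) - g (dyadic_floor J t))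
      \<le> norm (g (dyadic_floor (Suc m) t) - g (dyadic_floor m t))
        + norm (g (dyadic_floor m t) - g (dyadic_floor J t))"
    by (rule norm_diff_triangle_le[OF order_refl order_refl])
  also have "\<dots> \<le> A * \<rho> ^ Suc m + A * (\<rho> ^ Suc J - \<rho> ^ Suc m) / (1 - \<rho>)"
    using assms(2,3) by (intro add_mono step.IH dyadic_floor_Suc_le assms(1,5)) simp
  also have "\<dots> = A * (\<rho> ^ Suc J - \<rho> ^ Suc (Suc m)) / (1 - \<rho>)"
    using assms(4) by (simp add: field_simps)
  finally show ?case .
qed

lemma dyadic_floor_limit_le:
  assumes "dyadic_increments_le g (\<lambda>j. A * \<rho> ^ j)" "0 \<le> A" "0 \<le> \<rho>" "\<rho> < 1"
    and "continuous_on {0..1} g" "t \<in> {0..1}"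
  shows "norm (g t - g (dyadic_floor J t)) \<le> A * \<rho> ^ Suc J / (1 - \<rho>)"
proof -
  have "(\<lambda>m. dyadic_floor m t) \<longlonglongrightarrow> t"
  proof (rule tendsto_sandwich[where f="\<lambda>m. t - (1/2) ^ m" and h="\<lambda>m. t"])
    show "\<forall>\<^sub>F m in sequentially. t - (1/2) ^ m \<le> dyadic_floor m t"
      using dyadic_floor_bounds(3)[OF assms(6)] by (simp add: power_one_over)
    show "\<forall>\<^sub>F m in sequentially. dyadic_floor m t \<le> t"
      using dyadic_floor_bounds(4)[OF assms(6)] by simp
    have "(\<lambda>m. (1/2::real) ^ m) \<longlonglongrightarrow> 0"
      by (rule LIMSEQ_power_zero) simp
    from tendsto_diff[OF tendsto_const this, of t]
    show "(\<lambda>m. t - (1/2) ^ m) \<longlonglongrightarrow> t"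
      by simp
  qed simp
  then have "(\<lambda>m. g (dyadic_floor m t)) \<longlonglongrightarrow> g t"
    by (rule continuous_on_tendsto_compose[OF assms(5)]) (use assms(6) dyadic_floor_bounds(2) in auto)
  then have "(\<lambda>m. norm (g (dyadic_floor m t) - g (dyadic_floor J t))) \<longlonglongrightarrow> norm (g t - g (dyadic_floor J t))"
    by (intro tendsto_intros)
  then show ?thesis
  proof (rule Lim_bounded[where M=J], intro allI impI)
    fix m :: nat
    assume "J \<le> m"
    have "norm (g (dyadic_floor m t) - g (dyadic_floor J t)) \<le> A * (\<rho> ^ Suc J - \<rho> ^ Suc m) / (1 - \<rho>)"
      using dyadic_floor_telescope_le[OF assms(1-4,6) \<open>J \<le> m\<close>] .
    also have "\<dots> \<le> A * \<rho> ^ Suc J / (1 - \<rho>)"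
      using assms(2-4) by (intro divide_right_mono mult_left_mono) auto
    finally show "norm (g (dyadic_floor m t) - g (dyadic_floor J t)) \<le> A * \<rho> ^ Suc J / (1 - \<rho>)" .
  qed
qed

lemma dyadic_floor_close_le:
  assumes "dyadic_increments_le g (\<lambda>j. A * \<rho> ^ j)" "0 \<le> A" "0 \<le> \<rho>"
    and "s \<in> {0..1}" "t \<in> {0..1}" "\<bar>s - t\<bar> \<le> 1 / 2 ^ J"
  shows "norm (g (dyadic_floor J s) - g (dyadic_floor J t)) \<le> A * \<rho> ^ J"
proof -
  define ks where "ks = nat \<lfloor>2 ^ J * s\<rfloor>"
  define kt where "kt = nat \<lfloor>2 ^ J * t\<rfloor>"
  have "\<bar>2 ^ J * s - 2 ^ J * t\<bar> = 2 ^ J * \<bar>s - t\<bar>"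
    by (simp add: abs_mult flip: right_diff_distrib)
  also have "\<dots> \<le> (1::real)"
    using assms(6) by (simp add: field_simps)
  finally have "\<bar>2 ^ J * s - 2 ^ J * t\<bar> \<le> (1::real)" .
  moreover have "0 \<le> (2::real) ^ J * s" "0 \<le> (2::real) ^ J * t"
    using assms(4,5) by auto
  ultimately have "ks \<le> kt + 1" "kt \<le> ks + 1"
    unfolding ks_def kt_def by (simp_all add: abs_le_iff) linarith+
  then consider "ks = kt" | "ks = kt + 1" | "kt = ks + 1"
    by linarith
  then show ?thesis
  proof cases
    case 1
    then show ?thesis
      using assms(2,3) unfolding dyadic_floor_def ks_def kt_def by simp
  next
    case 2
    then have "kt < 2 ^ J"
      using dyadic_floor_bounds(1)[OF assms(4), of J] unfolding ks_def by simp
    then show ?thesis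
      using assms(1) 2 unfolding dyadic_increments_le_def dyadic_floor_def ks_def[symmetric] kt_def[symmetric]
      by (simp add: add.commute)
  next
    case 3
    then have "ks < 2 ^ J"
      using dyadic_floor_bounds(1)[OF assms(5), of J] unfolding kt_def by simp
    then show ?thesis
      using assms(1) 3 unfolding dyadic_increments_le_def dyadic_floor_def ks_def[symmetric] kt_def[symmetric]
      by (simp add: norm_minus_commute add.commute)
  qed
qed

lemma dyadic_chaining:
  fixes g :: "real \<Rightarrow> 'b::real_normed_vector"
  assumes "dyadic_increments_le g (\<lambda>j. A * \<rho> ^ j)" "0 \<le> A" "0 \<le> \<rho>" "\<rho> < 1"
    and "continuous_on {0..1} g" "s \<in> {0..1}" "t \<in> {0..1}" "\<bar>s - t\<bar> \<le> 1 / 2 ^ J"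
  shows "norm (g s - g t) \<le> A * \<rho> ^ J * (1 + \<rho>) / (1 - \<rho>)"
proof -
  have "norm (g s - g t) \<le> norm (g s - g (dyadic_floor J s))
      + norm (g (dyadic_floor J s) - g (dyadic_floor J t)) + norm (g t - g (dyadic_floor J t))"
    by (metis norm_diff_triangle_le norm_minus_commute order_refl add_mono)
  also have "\<dots> \<le> A * \<rho> ^ Suc J / (1 - \<rho>) + A * \<rho> ^ J + A * \<rho> ^ Suc J / (1 - \<rho>)"
    using assms by (intro add_mono dyadic_floor_limit_le dyadic_floor_close_le)
  also have "\<dots> = A * \<rho> ^ J * (1 + \<rho>) / (1 - \<rho>)"
  proof -
    have "x * \<rho> / (1 - \<rho>) + x + x * \<rho> / (1 - \<rho>) = (x * \<rho> + x * (1 - \<rho>) + x * \<rho>) / (1 - \<rho>)"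
      for x :: real
      using assms(4) by (simp add: add_divide_distrib)
    from this[of "A * \<rho> ^ J"] show ?thesis
      by (simp add: algebra_simps)
  qed
  finally show ?thesis .
qed

lemma dyadic_scale_exists:
  fixes \<delta> :: real
  assumes "0 < \<delta>" "\<delta> \<le> 1"
  obtains J where "1 / 2 ^ Suc J < \<delta>" "\<delta> \<le> 1 / 2 ^ J"
proof -
  obtain N where "(1/2) ^ N < \<delta>"
    using real_arch_pow_inv[of \<delta> "1/2"] assms by auto
  then have "\<not> \<delta> \<le> 1 / 2 ^ N"
    by (simp add: power_one_over)
  then obtain J where "\<delta> \<le> 1 / 2 ^ J" "\<not> \<delta> \<le> 1 / 2 ^ Suc J"
    using ex_least_nat_less[of "\<lambda>j. \<not> \<delta> \<le> 1 / 2 ^ j" N] assms(2) by auto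
  then show ?thesis
    using that not_le by blast
qed

section \<open>The modulus of continuity of Brownian motion\<close>

lemma exp_1_ge_8_div_3: "8 / 3 \<le> exp (1::real)"
proof -
  have "5837465777 / 2147483648 - inverse (2 ^ 32) \<le> exp (1::real)"
    using e_approx_32 unfolding abs_le_iff by linarith
  then show ?thesis
    by simp
qed

lemma exp_3_le_21: "exp (3::real) \<le> 21"
proof -
  have "exp (3::real) = exp 1 ^ 3"
    by (simp flip: exp_of_nat_mult)
  also have "\<dots> \<le> (272 / 100) ^ 3"
    using e_less_272 by (intro power_mono) auto
  also have "\<dots> \<le> 21"
    by (simp add: power_divide)
  finally show ?thesis .
qed

lemma std_brownian_dyadic_increment_tail:
  fixes B :: "real \<Rightarrow> 'a \<Rightarrow> real^'n"
  assumes bm: "std_brownian M B" and "L > 0"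
  defines "a \<equiv> \<lambda>j. 2 * sqrt L * sqrt ((1 + 1 / L) / 2) ^ j"
  defines "F \<equiv> \<lambda>j k. {\<omega>\<in>space M. a j < norm (B ((real k + 1) / 2 ^ j) \<omega> - B (real k / 2 ^ j) \<omega>)}"
  shows "F j k \<in> sets M" and "measure M (F j k) \<le> sqrt 2 ^ CARD('n) * exp (- L) * (1 / exp 1) ^ j"
proof -
  have times: "0 \<le> real k / 2 ^ j" "real k / 2 ^ j < (real k + 1) / 2 ^ j"
    by (auto simp: divide_strict_right_mono)
  have dt: "(real k + 1) / 2 ^ j - real k / 2 ^ j = 1 / 2 ^ j"
    by (simp add: diff_divide_distrib[symmetric])
  have a0: "0 \<le> a j"
    using assms(2) by (simp add: a_def)
  show "F j k \<in> sets M"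
    unfolding F_def by (rule std_brownian_increment_tail(1)[OF bm times a0])
  have "(sqrt ((1 + 1 / L) / 2) ^ j)\<^sup>2 = ((1 + 1 / L) / 2) ^ j"
    using assms(2) by (simp add: power2_eq_square flip: power_mult_distrib)
  then have "L * (1 + 1 / L) ^ j = (a j)\<^sup>2 / (4 * (1 / 2 ^ j))"
    using assms(2) by (simp add: a_def power_mult_distrib power_divide)
  moreover have "L + real j = L * (1 + real j * (1 / L))"
    using assms(2) by (simp add: field_simps)
  moreover have "\<dots> \<le> L * (1 + 1 / L) ^ j"
    using assms(2) by (intro mult_left_mono Bernoulli_inequality) (auto intro: order_trans[of _ 0])
  ultimately have "exp (- ((a j)\<^sup>2) / (4 * (1 / 2 ^ j))) \<le> exp (- L - real j)"
    by simp
  also have "\<dots> = exp (- L) * (1 / exp 1) ^ j"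
    by (simp add: exp_diff power_one_over flip: exp_of_nat_mult)
  finally have "sqrt 2 ^ CARD('n) * exp (- ((a j)\<^sup>2) / (4 * (1 / 2 ^ j)))
      \<le> sqrt 2 ^ CARD('n) * (exp (- L) * (1 / exp 1) ^ j)"
    by (intro mult_left_mono) auto
  moreover note std_brownian_increment_tail(2)[OF bm times a0]
  ultimately show "measure M (F j k) \<le> sqrt 2 ^ CARD('n) * exp (- L) * (1 / exp 1) ^ j"
    unfolding F_def dt mult.assoc by linarith
qed

lemma std_brownian_dyadic_increments:
  fixes B :: "real \<Rightarrow> 'a \<Rightarrow> real^'n"
  assumes bm: "std_brownian M B" and "L > 0"
  defines "a \<equiv> \<lambda>j. 2 * sqrt L * sqrt ((1 + 1 / L) / 2) ^ j"
  shows "{\<omega>\<in>space M. \<not> dyadic_increments_le (\<lambda>t. B t \<omega>) a} \<in> sets M"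
    and "measure M {\<omega>\<in>space M. \<not> dyadic_increments_le (\<lambda>t. B t \<omega>) a} \<le> 4 * sqrt 2 ^ CARD('n) * exp (- L)"
proof -
  interpret prob_space M
    using bm by (simp add: std_brownian_def)
  define F where "F j k = {\<omega>\<in>space M. a j < norm (B ((real k + 1) / 2 ^ j) \<omega> - B (real k / 2 ^ j) \<omega>)}"
    for j k :: nat
  define c where "c = sqrt 2 ^ CARD('n) * exp (- L)"
  have F: "F j k \<in> sets M" "measure M (F j k) \<le> c * (1 / exp 1) ^ j" for j k
    using std_brownian_dyadic_increment_tail[OF bm assms(2), of j k]
    unfolding F_def a_def c_def mult.assoc by blast+
  define G where "G j = (\<Union>k<2 ^ j. F j k)" for j
  have event: "{\<omega>\<in>space M. \<not> dyadic_increments_le (\<lambda>t. B t \<omega>) a} = (\<Union>j. G j)"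
    by (auto simp: dyadic_increments_le_def G_def F_def not_le)
  have G: "G j \<in> sets M" for j
    unfolding G_def using F(1) by auto
  then show "{\<omega>\<in>space M. \<not> dyadic_increments_le (\<lambda>t. B t \<omega>) a} \<in> sets M"
    unfolding event by auto
  have measure_G: "measure M (G j) \<le> c * (2 / exp 1) ^ j" for j
  proof -
    have "measure M (G j) \<le> (\<Sum>k<2 ^ j. measure M (F j k))"
      unfolding G_def using F(1) by (intro measure_UNION_le) auto
    also have "\<dots> \<le> (\<Sum>k<(2::nat) ^ j. c * (1 / exp 1) ^ j)"
      using F(2) by (intro sum_mono) auto
    also have "\<dots> = c * (2 / exp 1) ^ j"
      by (simp add: power_divide)
    finally show ?thesis .
  qed
  have geometric: "summable (\<lambda>j. c * (2 / exp 1) ^ j)"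
    using exp_1_ge_8_div_3 by (intro summable_mult summable_geometric) auto
  then have summable: "summable (\<lambda>j. measure M (G j))"
    by (rule summable_comparison_test'[of _ 0]) (use measure_G in auto)
  have "measure M (\<Union>j. G j) \<le> (\<Sum>j. measure M (G j))"
    using G summable by (intro finite_measure_subadditive_countably) auto
  also have "\<dots> \<le> (\<Sum>j. c * (2 / exp 1) ^ j)"
    using summable geometric measure_G by (intro suminf_le) auto
  also have "\<dots> = c * (1 / (1 - 2 / exp 1))"
    using exp_1_ge_8_div_3 by (simp add: suminf_mult suminf_geometric)
  also have "\<dots> \<le> c * 4"
  proof (rule mult_left_mono)
    show "1 / (1 - 2 / exp 1) \<le> (4::real)"
      using exp_1_ge_8_div_3 by (simp add: field_simps)
  qed (simp add: c_def)
  finally show "measure M {\<omega>\<in>space M. \<not> dyadic_increments_le (\<lambda>t. B t \<omega>) a} \<le> 4 * sqrt 2 ^ CARD('n) * exp (- L)"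
    unfolding event c_def by simp
qed

lemma one_plus_inverse_power_le:
  fixes L :: real
  assumes "4 \<le> L"
  shows "(1 + 1 / L) ^ J / 2 ^ J \<le> 21 / 2 ^ J + 21 * exp (- 2 * L)"
proof -
  have bernoulli: "(1 + 1 / L) ^ J \<le> exp (real J / L)"
  proof -
    have "(1 + 1 / L) ^ J \<le> exp (1 / L) ^ J"
      using assms by (intro power_mono) (auto simp: add.commute exp_ge_add_one_self)
    then show ?thesis
      by (simp flip: exp_of_nat_mult)
  qed
  show ?thesis
  proof (cases "real J \<le> 3 * L")
    case True
    then have "exp (real J / L) \<le> exp 3"
      using assms by (simp add: field_simps)
    then have "(1 + 1 / L) ^ J \<le> 21"
      using bernoulli exp_3_le_21 by linarith
    then have "(1 + 1 / L) ^ J / 2 ^ J \<le> 21 / 2 ^ J"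
      by (intro divide_right_mono) auto
    moreover have "0 \<le> 21 * exp (- 2 * L)"
      by simp
    ultimately show ?thesis
      by linarith
  next
    case False
    have "1 / L \<le> 1 / 4"
      using assms by simp
    then have "1 / L - ln 2 \<le> 0"
      using ln2_ge_two_thirds by linarith
    then have "real J * (1 / L - ln 2) \<le> 3 * L * (1 / L - ln 2)"
      using False by (intro mult_right_mono_neg) auto
    also have "\<dots> \<le> 3 - 2 * L"
      using ln2_ge_two_thirds assms by (simp add: field_simps)
    finally have exponent: "exp (real J / L - real J * ln 2) \<le> exp 3 * exp (- 2 * L)"
      by (simp add: algebra_simps flip: exp_add)
    have "(1 + 1 / L) ^ J / 2 ^ J \<le> exp (real J / L) / 2 ^ J"
      using bernoulli by (intro divide_right_mono) auto
    also have "\<dots> = exp (real J / L - real J * ln 2)"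
      by (simp add: exp_diff exp_of_nat_mult)
    also have "\<dots> \<le> exp 3 * exp (- 2 * L)"
      by (rule exponent)
    also have "\<dots> \<le> 21 * exp (- 2 * L)"
      using exp_3_le_21 by (intro mult_right_mono) auto
    moreover have "0 \<le> 21 / (2::real) ^ J"
      by simp
    ultimately show ?thesis
      by linarith
  qed
qed

lemma chaining_scale_le:
  fixes L \<phi> \<epsilon> \<delta> :: real
  assumes "4 \<le> L" "16800 * L \<le> \<phi>\<^sup>2" "8400 * L * exp (- 2 * L) \<le> \<epsilon>\<^sup>2" "0 \<le> \<phi>" "0 \<le> \<epsilon>"
    and "1 / 2 ^ Suc J < \<delta>"
  shows "20 * sqrt L * sqrt ((1 + 1 / L) / 2) ^ J \<le> sqrt \<delta> * \<phi> + \<epsilon>"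
proof -
  have "0 < (1::real) / 2 ^ Suc J"
    by simp
  then have "\<delta> > 0"
    using assms(6) by linarith
  have "(sqrt ((1 + 1 / L) / 2) ^ J)\<^sup>2 = ((1 + 1 / L) / 2) ^ J"
    using assms(1) by (simp add: power2_eq_square flip: power_mult_distrib)
  then have "(20 * sqrt L * sqrt ((1 + 1 / L) / 2) ^ J)\<^sup>2 = 400 * L * ((1 + 1 / L) ^ J / 2 ^ J)"
    using assms(1) by (simp add: power_mult_distrib power_divide)
  also have "\<dots> \<le> 400 * L * (21 / 2 ^ J + 21 * exp (- 2 * L))"
    using assms(1) one_plus_inverse_power_le by (intro mult_left_mono) auto
  also have "\<dots> = 16800 * L * (1 / 2 ^ Suc J) + 8400 * L * exp (- 2 * L)"
    by (simp add: algebra_simps)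
  also have "\<dots> \<le> \<phi>\<^sup>2 * \<delta> + \<epsilon>\<^sup>2"
    using assms(1-3,6) by (intro add_mono mult_mono) auto
  also have "\<dots> \<le> (sqrt \<delta> * \<phi> + \<epsilon>)\<^sup>2"
    using \<open>\<delta> > 0\<close> assms(4,5) by (simp add: power2_sum power_mult_distrib)
  finally show ?thesis
    by (rule power2_le_imp_le) (use \<open>\<delta> > 0\<close> assms(4,5) in auto)
qed

lemma modulus_leI:
  assumes "a \<le> b" "0 \<le> \<delta>"
    and "\<And>s t. s \<in> {a..b} \<Longrightarrow> t \<in> {a..b} \<Longrightarrow> \<bar>s - t\<bar> \<le> \<delta> \<Longrightarrow> norm (B s \<omega> - B t \<omega>) \<le> K"
  shows "modulus B \<delta> a b \<omega> \<le> K"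
  unfolding modulus_def
proof (rule cSup_least)
  show "{norm (B t1 \<omega> - B t2 \<omega>) | t1 t2. t1 \<in> {a..b} \<and> t2 \<in> {a..b} \<and> \<bar>t1 - t2\<bar> \<le> \<delta>} \<noteq> {}"
    using assms(1,2) by force
qed (use assms(3) in auto)

lemma Y_ev_fails:
  fixes B :: "real \<Rightarrow> 'a \<Rightarrow> real^'n"
  assumes bm: "std_brownian M B" and "4 \<le> L" "16800 * L \<le> (phi \<alpha>)\<^sup>2"
    and "8400 * L * exp (- 2 * L) \<le> (\<alpha> powr (- (2 * real CARD('n) + 1)))\<^sup>2"
  shows "\<exists>E\<in>sets M. {\<omega>\<in>space M. \<not> Y_ev B \<alpha> 0 1 \<omega>} \<subseteq> E
           \<and> measure M E \<le> 4 * sqrt 2 ^ CARD('n) * exp (- L)"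
proof -
  define \<rho> where "\<rho> = sqrt ((1 + 1 / L) / 2)"
  define A where "A = 2 * sqrt L"
  have "\<rho> \<le> sqrt (81 / 121)"
    unfolding \<rho>_def using assms(2) by (intro real_sqrt_le_mono) (simp add: field_simps)
  also have "sqrt (81 / 121) = (9 / 11 :: real)"
    by (simp add: real_sqrt_divide)
  finally have "\<rho> \<le> 9 / 11" .
  moreover have "0 \<le> \<rho>"
    unfolding \<rho>_def using assms(2) by simp
  ultimately have \<rho>: "0 \<le> \<rho>" "\<rho> < 1" "(1 + \<rho>) / (1 - \<rho>) \<le> 10"
    by (simp_all add: field_simps)
  have "Y_ev B \<alpha> 0 1 \<omega>"
    if "\<omega> \<in> space M" "dyadic_increments_le (\<lambda>t. B t \<omega>) (\<lambda>j. A * \<rho> ^ j)" for \<omega>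
    unfolding Y_ev_def
  proof (intro allI impI)
    fix \<delta> :: real
    assume "0 < \<delta> \<and> \<delta> \<le> 1 - 0"
    then obtain J where J: "1 / 2 ^ Suc J < \<delta>" "\<delta> \<le> 1 / 2 ^ J"
      using dyadic_scale_exists by auto
    have cont: "continuous_on {0..1} (\<lambda>t. B t \<omega>)"
      using bm that(1) unfolding std_brownian_def by (auto intro: continuous_on_subset)
    have "modulus B \<delta> 0 1 \<omega> \<le> A * \<rho> ^ J * (1 + \<rho>) / (1 - \<rho>)"
    proof (intro modulus_leI)
      fix s t :: real
      assume "s \<in> {0..1}" "t \<in> {0..1}" "\<bar>s - t\<bar> \<le> \<delta>"
      with J(2) show "norm (B s \<omega> - B t \<omega>) \<le> A * \<rho> ^ J * (1 + \<rho>) / (1 - \<rho>)"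
        using assms(2) by (intro dyadic_chaining[OF that(2) _ \<rho>(1,2) cont]) (auto simp: A_def)
    qed (use \<open>0 < \<delta> \<and> \<delta> \<le> 1 - 0\<close> in auto)
    also have "\<dots> = A * \<rho> ^ J * ((1 + \<rho>) / (1 - \<rho>))"
      by simp
    also have "\<dots> \<le> A * \<rho> ^ J * 10"
      using \<rho> assms(2) by (intro mult_left_mono) (auto simp: A_def)
    also have "\<dots> \<le> sqrt \<delta> * phi \<alpha> + \<alpha> powr (- (2 * real CARD('n) + 1))"
      unfolding A_def \<rho>_def using chaining_scale_le[OF assms(2-4) _ _ J(1)]
      by (simp add: phi_def mult_ac)
    finally show "modulus B \<delta> 0 1 \<omega> \<le> sqrt \<delta> * phi \<alpha> + \<alpha> powr (- (2 * real CARD('n) + 1))" .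
  qed
  moreover have "L > 0"
    using assms(2) by simp
  note bad = std_brownian_dyadic_increments[OF bm this, folded A_def \<rho>_def]
  ultimately show ?thesis
    by (intro bexI[of _ "{\<omega>\<in>space M. \<not> dyadic_increments_le (\<lambda>t. B t \<omega>) (\<lambda>j. A * \<rho> ^ j)}"]) auto
qed

lemma Y_ev_fails_powr:
  fixes B :: "real \<Rightarrow> 'a \<Rightarrow> real^'n"
  assumes bm: "std_brownian M B" and "exp 1 \<le> \<alpha>" "8 * sqrt 2 ^ CARD('n) \<le> \<alpha>"
    and "16800 * ((2 * real CARD('n) + 2) * ln \<alpha>) \<le> (phi \<alpha>)\<^sup>2"
    and "8400 * ((2 * real CARD('n) + 2) * ln \<alpha>) \<le> \<alpha>\<^sup>2"
  shows "\<exists>E\<in>sets M. {\<omega>\<in>space M. \<not> Y_ev B \<alpha> 0 1 \<omega>} \<subseteq> E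
           \<and> measure M E \<le> \<alpha> powr (- (2 * real CARD('n) + 1)) / 2"
proof -
  define L where "L = (2 * real CARD('n) + 2) * ln \<alpha>"
  define \<epsilon> where "\<epsilon> = \<alpha> powr (- (2 * real CARD('n) + 1))"
  have "\<alpha> > 0"
    using assms(2) exp_gt_zero[of 1] by linarith
  then have "1 \<le> ln \<alpha>"
    using ln_le_cancel_iff[of "exp 1" \<alpha>] assms(2) by simp
  then have "4 * 1 \<le> L"
    unfolding L_def by (intro mult_mono) auto
  then have L: "4 \<le> L"
    by simp
  have "\<alpha> * exp (- L) = exp (ln \<alpha> + - L)"
    using \<open>\<alpha> > 0\<close> by (simp add: exp_diff exp_minus divide_inverse)
  also have "ln \<alpha> + - L = - (2 * real CARD('n) + 1) * ln \<alpha>"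
    by (simp add: L_def algebra_simps)
  finally have \<epsilon>: "\<epsilon> = \<alpha> * exp (- L)"
    using \<open>\<alpha> > 0\<close> by (simp add: \<epsilon>_def powr_def)
  have "8400 * L * exp (- 2 * L) \<le> \<alpha>\<^sup>2 * exp (- 2 * L)"
    using assms(5) by (simp add: L_def)
  also have "\<dots> = \<epsilon>\<^sup>2"
    by (simp add: \<epsilon> power2_eq_square flip: exp_add)
  finally have small_\<epsilon>: "8400 * L * exp (- 2 * L) \<le> \<epsilon>\<^sup>2" .
  have "16800 * L \<le> (phi \<alpha>)\<^sup>2"
    using assms(4) by (simp add: L_def)
  from Y_ev_fails[OF bm L this small_\<epsilon>[unfolded \<epsilon>_def]]
  obtain E where E: "E \<in> sets M" "{\<omega>\<in>space M. \<not> Y_ev B \<alpha> 0 1 \<omega>} \<subseteq> E"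
      "measure M E \<le> 4 * sqrt 2 ^ CARD('n) * exp (- L)"
    by blast
  have "4 * sqrt 2 ^ CARD('n) * exp (- L) \<le> \<alpha> / 2 * exp (- L)"
    using assms(3) by (intro mult_right_mono) auto
  with E(3) have "measure M E \<le> \<alpha> / 2 * exp (- L)"
    by linarith
  also have "\<dots> = \<epsilon> / 2"
    by (simp add: \<epsilon>)
  finally have "measure M E \<le> \<epsilon> / 2" .
  with E(1,2) show ?thesis
    unfolding \<epsilon>_def by blast
qed

section \<open>Choice of the threshold\<close>

lemma eventually_ln_le_phi: "\<forall>\<^sub>F x in at_top. c * ln x \<le> phi x"
proof -
  have "(\<lambda>x::real. ln x) \<in> o(\<lambda>x. exp (sqrt (ln x)))"
    by real_asymp
  then have "\<forall>\<^sub>F x in at_top. norm (ln x) \<le> 1 / (\<bar>c\<bar> + 1) * norm (exp (sqrt (ln x)))"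
    by (rule landau_o.smallD) (simp add: add_pos_nonneg)
  then show ?thesis
  proof (rule eventually_mono)
    fix x :: real
    assume "norm (ln x) \<le> 1 / (\<bar>c\<bar> + 1) * norm (exp (sqrt (ln x)))"
    then have "(\<bar>c\<bar> + 1) * \<bar>ln x\<bar> \<le> phi x"
      by (simp add: phi_def field_simps add_pos_nonneg)
    moreover have "c * ln x \<le> \<bar>c\<bar> * \<bar>ln x\<bar>"
      by (metis abs_ge_self abs_mult)
    moreover have "\<bar>c\<bar> * \<bar>ln x\<bar> \<le> (\<bar>c\<bar> + 1) * \<bar>ln x\<bar>"
      by (simp add: mult_right_mono)
    ultimately show "c * ln x \<le> phi x"
      by linarith
  qed
qed

lemma eventually_threshold:
  fixes q :: real
  assumes "0 \<le> q"
  shows "\<forall>\<^sub>F x in at_top. exp 1 \<le> x \<and> ln 4 + q * ln x \<le> phi x / 2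
           \<and> 16800 * (q * ln x) \<le> (phi x)\<^sup>2 \<and> 8400 * (q * ln x) \<le> x\<^sup>2"
  using eventually_ge_at_top[of "exp 1"] eventually_ln_le_phi[of "16800 * (q + 2)"]
proof eventually_elim
  case (elim x)
  then have "0 < x"
    using exp_gt_zero[of 1] by linarith
  then have "1 \<le> ln x"
    using ln_le_cancel_iff[of "exp 1" x] elim(1) by simp
  then have "ln 4 \<le> 2 * ln x"
    using ln_mult[of 2 2] ln_2_less_1 by simp
  have "(q + 2) * ln x = q * ln x + 2 * ln x" "0 \<le> q * ln x"
    using \<open>1 \<le> ln x\<close> assms by (simp_all add: algebra_simps)
  moreover have "16800 * ((q + 2) * ln x) \<le> phi x"
    using elim(2) by (simp add: algebra_simps)
  moreover have "phi x \<le> (phi x)\<^sup>2" "phi x \<le> x\<^sup>2"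
  proof -
    have "1 \<le> phi x" "phi x \<le> x"
      using phi_bounds[OF elim(1)] by auto
    moreover from this have "phi x * 1 \<le> phi x * phi x" "x * 1 \<le> x * x"
      by (intro mult_left_mono; linarith)+
    ultimately show "phi x \<le> (phi x)\<^sup>2" "phi x \<le> x\<^sup>2"
      unfolding power2_eq_square by linarith+
  qed
  ultimately show ?case
    using elim(1) \<open>ln 4 \<le> 2 * ln x\<close> \<open>1 \<le> ln x\<close> by (intro conjI; linarith)
qed

lemma R_ev_fails:
  fixes B :: "real \<Rightarrow> 'a \<Rightarrow> real^'n"
  assumes "bm_ppp M B X" "exp 1 \<le> \<alpha>" "8 * sqrt 2 ^ CARD('n) \<le> \<alpha>"
    and "ln 4 + (2 * real CARD('n) + 2) * ln \<alpha> \<le> phi \<alpha> / 2"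
    and "16800 * ((2 * real CARD('n) + 2) * ln \<alpha>) \<le> (phi \<alpha>)\<^sup>2"
    and "8400 * ((2 * real CARD('n) + 2) * ln \<alpha>) \<le> \<alpha>\<^sup>2"
  shows "\<exists>E\<in>sets M. {\<omega>\<in>space M. \<not> R_ev B X \<alpha> 0 1 \<omega>} \<subseteq> E
           \<and> measure M E \<le> \<alpha> powr (- (2 * real CARD('n) + 1))"
proof -
  have bm: "std_brownian M B" and pp: "poisson_pp M X"
    using assms(1) by (auto simp: bm_ppp_def)
  obtain EN where EN: "EN \<in> sets M" "{\<omega>\<in>space M. \<not> N_ev X \<alpha> 0 1 \<omega>} \<subseteq> EN"
      "measure M EN \<le> \<alpha> powr (1 - (2 * real CARD('n) + 2)) / 2"
    using N_ev_fails_powr[OF pp assms(2,4)] by blast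
  obtain EY where EY: "EY \<in> sets M" "{\<omega>\<in>space M. \<not> Y_ev B \<alpha> 0 1 \<omega>} \<subseteq> EY"
      "measure M EY \<le> \<alpha> powr (- (2 * real CARD('n) + 1)) / 2"
    using Y_ev_fails_powr[OF bm assms(2,3,5,6)] by blast
  have "\<alpha> powr (1 - (2 * real CARD('n) + 2)) = \<alpha> powr (- (2 * real CARD('n) + 1))"
    by (rule arg_cong[where f="(powr) \<alpha>"]) simp
  then have "measure M (EN \<union> EY) \<le> \<alpha> powr (- (2 * real CARD('n) + 1))"
    using measure_Un_le[OF EN(1) EY(1)] EN(3) EY(3) by linarith
  with EN EY show ?thesis
    by (intro bexI[of _ "EN \<union> EY"]) (auto simp: R_ev_def)
qed

theorem mainTheorem3:
  assumes "CARD('n) \<ge> 2"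
  shows "\<exists>C>0. \<forall>(M :: 'a measure) (B :: real \<Rightarrow> 'a \<Rightarrow> real^'n) X (\<alpha>::real).
           bm_ppp M B X \<and> \<alpha> > C \<longrightarrow>
           (\<exists>E\<in>sets M. {\<omega>\<in>space M. \<not> R_ev B X \<alpha> 0 1 \<omega>} \<subseteq> E \<and>
                       measure M E \<le> \<alpha> powr (- (2 * real CARD('n) + 1)))"
proof -
  \<comment> \<open>the argument works in every dimension\<close>
  obtain C where C: "\<And>\<alpha>. C \<le> \<alpha> \<Longrightarrow> 8 * sqrt 2 ^ CARD('n) \<le> \<alpha> \<and> exp 1 \<le> \<alpha>
      \<and> ln 4 + (2 * real CARD('n) + 2) * ln \<alpha> \<le> phi \<alpha> / 2
      \<and> 16800 * ((2 * real CARD('n) + 2) * ln \<alpha>) \<le> (phi \<alpha>)\<^sup>2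
      \<and> 8400 * ((2 * real CARD('n) + 2) * ln \<alpha>) \<le> \<alpha>\<^sup>2"
    using eventually_conj[OF eventually_ge_at_top eventually_threshold[of "2 * real CARD('n) + 2"]]
    unfolding eventually_at_top_linorder by force
  show ?thesis
    by (intro exI[of _ "max C 1"] conjI allI impI R_ev_fails; use C in force)
qed

end
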